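(* Let $S=[a+1,a+m]$ with $a+m\le n$ and let $r\ge0$. Let $c_1,\dots,c_{r+1}\in S$, let $\lambda=(\lambda_1,\dots,\lambda_d)$ be a composition of $r+1$ with partial sums $p_j=\sum_{i=1}^j\lambda_i$ ($p_0=0$), let $\gamma_1,\dots,\gamma_d$ be nonnegative integers with $\gamma_j\ge\gamma_{j-1}+\lambda_{j-1}$ for $j\ge2$, set $\delta_j=k-\lambda_j-\gamma_j$, and let $a_{j,i},b_{j,i}\in[n]$ be arbitrary. Then the polynomial $$\sum_{\sigma\in\mathfrak S_{r+1}}\operatorname{sign}(\sigma)\prod_{j=1}^d[a_{j,1},\dots,a_{j,\gamma_j},c_{\sigma(p_{j-1}+1)},\dots,c_{\sigma(p_j)},b_{j,1},\dots,b_{j,\delta_j}]$$ vanishes on $X_{S\le r}$, i.e. lies in the ideal $\mathcal J_{S\le r}$.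
   Context: Let $\Bbbk$ be algebraically closed of characteristic $0$, $1\le k<n$. $R(k,n)=\Bbbk[[\mathbf a]:\mathbf a\in\binom{[n]}{k}]$ is the polynomial ring in Plücker variables. For a sequence $x_1,\dots,x_k$ in $[n]$, $[x_1,\dots,x_k]$ is $0$ if two entries coincide and otherwise $\operatorname{sign}(\tau)[\{x_1,\dots,x_k\}]$, $\tau$ the sorting permutation (so it represents the $k\times k$ minor on columns $x_1,\dots,x_k$ in that order). For $S\subseteq[n]$, $r\ge0$, $X_{S\le r}=\{V\in\mathrm{Gr}(k,n):\text{the columns indexed by }S\text{ of a matrix with row span }V\text{ have rank}\le r\}$, and $\mathcal J_{S\le r}\subseteq R(k,n)$ is its defining ideal under the Plücker embedding. *)

theory Defs
  imports "Jordan_Normal_Form.Determinant" "Jordan_Normal_Form.DL_Rank_Submatrix"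
    "HOL-Computational_Algebra.Polynomial"
begin

definition alg_closed_field :: "'a::field itself \<Rightarrow> bool" where
  "alg_closed_field _ \<longleftrightarrow> (\<forall>p::'a poly. degree p \<ge> 1 \<longrightarrow> (\<exists>x. poly p x = 0))"

text \<open>Points of Gr(k,n) are represented by k x n matrices of full rank k (row span V).
  Columns are indexed 0..n-1; the paper's column x in [n] = {1..n} is column x-1.\<close>

text \<open>The bracket [x_1,...,x_k] evaluated at (the Pluecker coordinates of) the row span of M:
  the k x k minor of M on the columns x_1,...,x_k taken in that order.\<close>
definition bracket :: "'a::comm_ring_1 mat \<Rightarrow> nat list \<Rightarrow> 'a" where
  "bracket M xs = det (mat (dim_row M) (dim_row M) (\<lambda>(i,j). M $$ (i, xs ! j - 1)))"

definition in_X :: "nat \<Rightarrow> nat \<Rightarrow> nat set \<Rightarrow> nat \<Rightarrow> 'a::field mat \<Rightarrow> bool" where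
  "in_X k n S r M \<longleftrightarrow> dim_row M = k \<and> dim_col M = n \<and> vec_space.rank k M = k \<and>
     vec_space.rank k (submatrix M UNIV {j. Suc j \<in> S}) \<le> r"

definition psum :: "nat list \<Rightarrow> nat \<Rightarrow> nat" where
  "psum lam j = sum_list (take j lam)"

text \<open>The j-th factor's column sequence (j 0-indexed, j < d):
  a_{j,1..gamma_j}, c_{sigma(p_{j-1}+1)},...,c_{sigma(p_j)}, b_{j,1..delta_j}.
  Here c and sigma are 0-indexed (sigma permutes {0..<r+1}).\<close>
definition block_seq :: "nat \<Rightarrow> nat list \<Rightarrow> nat list \<Rightarrow> (nat \<Rightarrow> nat \<Rightarrow> nat) \<Rightarrow>
    (nat \<Rightarrow> nat \<Rightarrow> nat) \<Rightarrow> (nat \<Rightarrow> nat) \<Rightarrow> (nat \<Rightarrow> nat) \<Rightarrow> nat \<Rightarrow> nat list" where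
  "block_seq k lam gam A B c \<sigma> j =
     map (A j) [0..<gam ! j] @ map (\<lambda>i. c (\<sigma> i)) [psum lam j..<psum lam (Suc j)]
     @ map (B j) [0..<k - lam ! j - gam ! j]"

definition the_poly_at :: "nat \<Rightarrow> nat \<Rightarrow> nat list \<Rightarrow> nat list \<Rightarrow> (nat \<Rightarrow> nat \<Rightarrow> nat) \<Rightarrow>
    (nat \<Rightarrow> nat \<Rightarrow> nat) \<Rightarrow> (nat \<Rightarrow> nat) \<Rightarrow> 'a::comm_ring_1 mat \<Rightarrow> 'a" where
  "the_poly_at k r lam gam A B c M =
     (\<Sum>\<sigma> \<in> {\<sigma>. \<sigma> permutes {0..<Suc r}}.
        signof \<sigma> * (\<Prod>j<length lam. bracket M (block_seq k lam gam A B c \<sigma> j)))"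

end

theory Submission
  imports Defs
begin

text \<open>Replace the columns \<open>c\<^sub>1, \<dots>, c\<^sub>r\<^sub>+\<^sub>1\<close> by arbitrary vectors \<open>w\<^sub>1, \<dots>, w\<^sub>r\<^sub>+\<^sub>1\<close>. The resulting
  expression is multilinear in the \<open>w\<^sub>l\<close>, since each \<open>w\<^sub>l\<close> occupies exactly one column of exactly
  one bracket, and alternating, since precomposing \<open>\<sigma>\<close> with a transposition only flips the sign.
  On \<open>X\<^sub>S\<^sub>\<le>\<^sub>r\<close> the \<open>r + 1\<close> columns indexed by \<open>c\<^sub>i \<in> S\<close> lie in a space of dimension at most \<open>r\<close>,
  hence are linearly dependent, and an alternating multilinear form vanishes on a linearly
  dependent family.\<close>

definition multilinear_form :: "nat \<Rightarrow> ((nat \<Rightarrow> 'b \<Rightarrow> 'a::comm_ring_1) \<Rightarrow> 'a) \<Rightarrow> bool" where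
  "multilinear_form N F \<longleftrightarrow> (\<forall>i<N. \<forall>w (L :: nat set) \<beta> h. finite L \<longrightarrow>
     F (w(i := (\<lambda>t. \<Sum>l\<in>L. \<beta> l * h l t))) = (\<Sum>l\<in>L. \<beta> l * F (w(i := h l))))"

definition alternating_form :: "nat \<Rightarrow> ((nat \<Rightarrow> 'b \<Rightarrow> 'a::comm_ring_1) \<Rightarrow> 'a) \<Rightarrow> bool" where
  "alternating_form N F \<longleftrightarrow> (\<forall>w i l. i < N \<longrightarrow> l < N \<longrightarrow> i \<noteq> l \<longrightarrow> w i = w l \<longrightarrow> F w = 0)"

lemma alternating_multilinear_form_dependent_eq_0:
  fixes F :: "(nat \<Rightarrow> 'b \<Rightarrow> 'a::field) \<Rightarrow> 'a"
  assumes lin: "multilinear_form N F" and alt: "alternating_form N F"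
    and i: "i < N" "v i \<noteq> 0" and rel: "\<And>t. (\<Sum>l<N. v l * w l t) = 0"
  shows "F w = 0"
proof -
  define L where "L = {..<N} - {i}"
  define \<beta> where "\<beta> l = - v l / v i" for l
  have "w i = (\<lambda>t. \<Sum>l\<in>L. \<beta> l * w l t)"
  proof
    fix t
    have "(\<Sum>l<N. v l * w l t) = v i * w i t + (\<Sum>l\<in>L. v l * w l t)"
      unfolding L_def using i(1) by (intro sum.remove) auto
    then have "w i t * v i = - (\<Sum>l\<in>L. v l * w l t)"
      using rel[of t] by (simp add: eq_neg_iff_add_eq_0 mult.commute)
    then have "w i t = - (\<Sum>l\<in>L. v l * w l t) / v i"
      using i(2) by (metis eq_divide_eq)
    then show "w i t = (\<Sum>l\<in>L. \<beta> l * w l t)"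
      unfolding \<beta>_def by (simp add: sum_divide_distrib sum_negf)
  qed
  then have "F w = F (w(i := (\<lambda>t. \<Sum>l\<in>L. \<beta> l * w l t)))"
    by (metis fun_upd_triv)
  also have "\<dots> = (\<Sum>l\<in>L. \<beta> l * F (w(i := w l)))"
    using lin i(1) unfolding multilinear_form_def L_def by simp
  also have "\<dots> = 0"
  proof (intro sum.neutral ballI)
    fix l assume "l \<in> L"
    then have "l < N" "l \<noteq> i" "(w(i := w l)) i = (w(i := w l)) l"
      unfolding L_def by auto
    then show "\<beta> l * F (w(i := w l)) = 0"
      using alt i(1) unfolding alternating_form_def by simp
  qed
  finally show ?thesis .
qed

definition mat_of_col_fun :: "nat \<Rightarrow> (nat \<Rightarrow> nat \<Rightarrow> 'a) \<Rightarrow> 'a mat" where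
  "mat_of_col_fun n g = mat n n (\<lambda>(i, j). g j i)"

lemma det_mat_of_col_fun_linear:
  fixes g :: "nat \<Rightarrow> nat \<Rightarrow> 'a::comm_ring_1"
  assumes j: "j < n" and L: "finite L"
  shows "det (mat_of_col_fun n (g(j := (\<lambda>t. \<Sum>l\<in>L. \<beta> l * h l t)))) =
    (\<Sum>l\<in>L. \<beta> l * det (mat_of_col_fun n (g(j := h l))))"
proof -
  define G where "G x = mat_of_col_fun n (g(j := x))" for x
  have G: "G x \<in> carrier_mat n n" for x
    unfolding G_def mat_of_col_fun_def by simp
  have cofactor_eq: "cofactor (G x) t j = cofactor (G y) t j" for x y t
  proof -
    have "mat_delete (G x) t j = mat_delete (G y) t j"
      unfolding mat_delete_def G_def mat_of_col_fun_def using j by (intro eq_matI) auto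
    then show ?thesis unfolding cofactor_def by simp
  qed
  have "G x $$ (t, j) = x t" if "t < n" for x t
    using that j unfolding G_def mat_of_col_fun_def by simp
  then have expand: "det (G x) = (\<Sum>t<n. x t * cofactor (G (g j)) t j)" for x
    unfolding laplace_expansion_column[OF G j]
    by (intro sum.cong refl) (simp add: cofactor_eq[where x = x and y = "g j"])
  define C where "C t = cofactor (G (g j)) t j" for t
  have "(\<Sum>t<n. (\<Sum>l\<in>L. \<beta> l * h l t) * C t) = (\<Sum>t<n. \<Sum>l\<in>L. \<beta> l * (h l t * C t))"
    by (simp add: sum_distrib_right mult.assoc)
  also have "\<dots> = (\<Sum>l\<in>L. \<beta> l * (\<Sum>t<n. h l t * C t))"
    by (subst sum.swap) (simp add: sum_distrib_left)
  finally show ?thesis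
    unfolding G_def[symmetric] expand C_def .
qed

lemma psum_Suc: "j < length lam \<Longrightarrow> psum lam (Suc j) = psum lam j + lam ! j"
  unfolding psum_def by (simp add: take_Suc_conv_app_nth)

lemma psum_mono: "j \<le> j' \<Longrightarrow> psum lam j \<le> psum lam j'"
  unfolding psum_def by (metis le_add1 le_add_diff_inverse sum_list_append take_add)

lemma psum_block_exists:
  "q < sum_list lam \<Longrightarrow> \<exists>j<length lam. psum lam j \<le> q \<and> q < psum lam (Suc j)"
proof -
  have "d \<le> length lam \<Longrightarrow> q < psum lam d \<Longrightarrow> \<exists>j<d. psum lam j \<le> q \<and> q < psum lam (Suc j)" for d
  proof (induction d)
    case 0
    then show ?case by (simp add: psum_def)
  next
    case (Suc d)
    then show ?case by (cases "q < psum lam d") (auto intro: less_SucI)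
  qed
  then show "q < sum_list lam \<Longrightarrow> ?thesis"
    by (simp add: psum_def)
qed

lemma psum_block_unique:
  assumes "psum lam j \<le> q" "q < psum lam (Suc j)" "psum lam j' \<le> q" "q < psum lam (Suc j')"
  shows "j = j'"
  using psum_mono[of "Suc j" j' lam] psum_mono[of "Suc j'" j lam] assms
  by (cases j j' rule: linorder_cases) auto

lemma block_seq_nth:
  assumes "j < length lam" "p < k" "lam ! j + gam ! j \<le> k"
  shows "block_seq k lam gam A B c \<sigma> j ! p =
    (if p < gam ! j then A j p
     else if p < gam ! j + lam ! j then c (\<sigma> (psum lam j + (p - gam ! j)))
     else B j (p - gam ! j - lam ! j))"
  using psum_Suc[OF assms(1)] assms(2,3) unfolding block_seq_def by (auto simp: nth_append)

context
  fixes k r :: nat and lam gam :: "nat list"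
    and fixed :: "nat \<Rightarrow> nat \<Rightarrow> nat \<Rightarrow> 'a::{idom, ring_char_0}"
begin

text \<open>The columns of the \<open>j\<close>-th bracket, with the columns \<open>c\<^sub>\<sigma>\<^sub>(\<^sub>i\<^sub>)\<close> replaced by arbitrary vectors
  \<open>w (\<sigma> i)\<close> and the columns \<open>a\<^sub>j\<^sub>,\<^sub>i\<close>, \<open>b\<^sub>j\<^sub>,\<^sub>i\<close> given by \<open>fixed j\<close>.\<close>
definition factor_col :: "(nat \<Rightarrow> nat \<Rightarrow> 'a) \<Rightarrow> (nat \<Rightarrow> nat) \<Rightarrow> nat \<Rightarrow> nat \<Rightarrow> nat \<Rightarrow> 'a" where
  "factor_col w \<sigma> j p =
     (if gam ! j \<le> p \<and> p < gam ! j + lam ! j then w (\<sigma> (psum lam j + (p - gam ! j)))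
      else fixed j p)"

definition bracket_alternant :: "(nat \<Rightarrow> nat \<Rightarrow> 'a) \<Rightarrow> 'a" where
  "bracket_alternant w = (\<Sum>\<sigma> | \<sigma> permutes {0..<Suc r}.
     signof \<sigma> * (\<Prod>j<length lam. det (mat_of_col_fun k (factor_col w \<sigma> j))))"

lemma alternating_bracket_alternant: "alternating_form (Suc r) bracket_alternant"
  unfolding alternating_form_def
proof (intro allI impI)
  fix w :: "nat \<Rightarrow> nat \<Rightarrow> 'a" and i l
  assume i: "i < Suc r" and l: "l < Suc r" and "i \<noteq> l" and w: "w i = w l"
  define \<tau> where "\<tau> = Transposition.transpose i l"
  have \<tau>: "\<tau> permutes {0..<Suc r}"
    unfolding \<tau>_def using i l by (intro permutes_swap_id) auto
  have sign_\<tau>: "signof \<tau> = (-1::'a)"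
    unfolding \<tau>_def using \<open>i \<noteq> l\<close> by (simp add: sign_swap_id)
  have \<tau>_involutive: "\<tau> \<circ> (\<tau> \<circ> \<sigma>) = \<sigma>" for \<sigma>
    unfolding \<tau>_def by (auto simp: fun_eq_iff)
  have "w \<circ> \<tau> = w"
    unfolding \<tau>_def using w by (auto simp: fun_eq_iff transpose_def)
  then have factor_\<tau>: "factor_col w (\<tau> \<circ> \<sigma>) = factor_col w \<sigma>" for \<sigma>
    unfolding factor_col_def by (auto simp: fun_eq_iff comp_def dest: fun_cong)
  define f where "f \<sigma> = signof \<sigma> * (\<Prod>j<length lam. det (mat_of_col_fun k (factor_col w \<sigma> j)))" for \<sigma>
  have "bracket_alternant w = (\<Sum>\<sigma> | \<sigma> permutes {0..<Suc r}. f (\<tau> \<circ> \<sigma>))"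
    unfolding bracket_alternant_def f_def[symmetric]
    by (rule sum.reindex_bij_witness[where i="(\<circ>) \<tau>" and j="(\<circ>) \<tau>"])
       (auto simp: \<tau>_involutive permutes_compose[OF _ \<tau>])
  also have "\<dots> = (\<Sum>\<sigma> | \<sigma> permutes {0..<Suc r}. - f \<sigma>)"
    by (intro sum.cong refl) (simp add: f_def factor_\<tau> signof_compose[OF \<tau>] sign_\<tau>)
  also have "\<dots> = - bracket_alternant w"
    unfolding bracket_alternant_def f_def by (simp add: sum_negf)
  finally show "bracket_alternant w = 0" by simp
qed

lemma factor_col_fun_upd:
  assumes \<sigma>: "\<sigma> permutes {0..<Suc r}" and "\<sigma> q = i"
    and j0: "psum lam j0 \<le> q" "q < psum lam (Suc j0)" "j0 < length lam"
    and j: "j < length lam"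
  shows "factor_col (w(i := x)) \<sigma> j =
    (if j = j0 then (factor_col w \<sigma> j)(gam ! j0 + (q - psum lam j0) := x) else factor_col w \<sigma> j)"
proof -
  define p0 where "p0 = gam ! j0 + (q - psum lam j0)"
  have p0: "gam ! j0 \<le> p0" "p0 < gam ! j0 + lam ! j0" "psum lam j0 + (p0 - gam ! j0) = q"
    using j0 psum_Suc[OF j0(3)] unfolding p0_def by auto
  have hit_iff: "\<sigma> (psum lam j + (p - gam ! j)) = i \<longleftrightarrow> j = j0 \<and> p = p0"
    if "gam ! j \<le> p" "p < gam ! j + lam ! j" for p
  proof
    assume "\<sigma> (psum lam j + (p - gam ! j)) = i"
    then have pos: "psum lam j + (p - gam ! j) = q"
      using \<open>\<sigma> q = i\<close> permutes_inj[OF \<sigma>] by (metis injD)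
    then have "j = j0"
      using psum_block_unique[OF _ _ j0(1,2)] psum_Suc[OF j] that by auto
    with pos show "j = j0 \<and> p = p0"
      using that(1) unfolding p0_def by auto
  next
    assume "j = j0 \<and> p = p0"
    then show "\<sigma> (psum lam j + (p - gam ! j)) = i"
      using p0(3) \<open>\<sigma> q = i\<close> by simp
  qed
  show ?thesis
    unfolding p0_def[symmetric]
  proof (rule ext)
    fix p
    show "factor_col (w(i := x)) \<sigma> j p =
        (if j = j0 then (factor_col w \<sigma> j)(p0 := x) else factor_col w \<sigma> j) p"
    proof (cases "gam ! j \<le> p \<and> p < gam ! j + lam ! j")
      case True
      then have "factor_col (w(i := x)) \<sigma> j p =
          (if j = j0 \<and> p = p0 then x else factor_col w \<sigma> j p)"
        using hit_iff[of p] unfolding factor_col_def by simp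
      then show ?thesis by simp
    next
      case False
      then have "factor_col (w(i := x)) \<sigma> j p = factor_col w \<sigma> j p" "j = j0 \<longrightarrow> p \<noteq> p0"
        using p0(1,2) unfolding factor_col_def by auto
      then show ?thesis by simp
    qed
  qed
qed

lemma bracket_product_linear:
  assumes sum: "sum_list lam = Suc r" and fits: "\<forall>j<length lam. lam ! j + gam ! j \<le> k"
    and \<sigma>: "\<sigma> permutes {0..<Suc r}" and i: "i < Suc r" and L: "finite L"
  shows "(\<Prod>j<length lam. det (mat_of_col_fun k (factor_col (w(i := (\<lambda>t. \<Sum>l\<in>L. \<beta> l * h l t))) \<sigma> j))) =
    (\<Sum>l\<in>L. \<beta> l * (\<Prod>j<length lam. det (mat_of_col_fun k (factor_col (w(i := h l)) \<sigma> j))))"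
proof -
  obtain q where q: "q < Suc r" "\<sigma> q = i"
    using i permutes_image[OF \<sigma>] by (metis atLeastLessThan_iff imageE zero_le)
  then obtain j0 where j0: "j0 < length lam" "psum lam j0 \<le> q" "q < psum lam (Suc j0)"
    using psum_block_exists[of q lam] sum by auto
  define p0 where "p0 = gam ! j0 + (q - psum lam j0)"
  have p0: "p0 < k"
    using fits j0 psum_Suc[OF j0(1)] unfolding p0_def by fastforce
  define D where "D j = det (mat_of_col_fun k (factor_col w \<sigma> j))" for j
  have upd: "factor_col (w(i := x)) \<sigma> j =
      (if j = j0 then (factor_col w \<sigma> j0)(p0 := x) else factor_col w \<sigma> j)"
    if "j < length lam" for j x
    using factor_col_fun_upd[OF \<sigma> q(2) j0(2,3,1) that] unfolding p0_def by simp
  have split: "(\<Prod>j<length lam. det (mat_of_col_fun k (factor_col (w(i := x)) \<sigma> j))) =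
      det (mat_of_col_fun k ((factor_col w \<sigma> j0)(p0 := x))) * (\<Prod>j\<in>{..<length lam} - {j0}. D j)"
    for x
  proof -
    have "(\<Prod>j\<in>{..<length lam} - {j0}. det (mat_of_col_fun k (factor_col (w(i := x)) \<sigma> j))) =
        (\<Prod>j\<in>{..<length lam} - {j0}. D j)"
      unfolding D_def by (intro prod.cong refl) (simp add: upd)
    moreover have "j0 \<in> {..<length lam}"
      using j0(1) by simp
    ultimately show ?thesis
      by (simp add: prod.remove[of _ j0] upd)
  qed
  show ?thesis
    unfolding split det_mat_of_col_fun_linear[OF p0 L]
    by (simp add: sum_distrib_right mult.assoc)
qed

lemma multilinear_bracket_alternant:
  assumes "sum_list lam = Suc r" and "\<forall>j<length lam. lam ! j + gam ! j \<le> k"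
  shows "multilinear_form (Suc r) bracket_alternant"
  unfolding multilinear_form_def
proof (intro allI impI)
  fix i :: nat and w h :: "nat \<Rightarrow> nat \<Rightarrow> 'a" and \<beta> :: "nat \<Rightarrow> 'a" and L :: "nat set"
  assume "i < Suc r" "finite L"
  define P where "P \<sigma> l = (\<Prod>j<length lam. det (mat_of_col_fun k (factor_col (w(i := h l)) \<sigma> j)))"
    for \<sigma> l
  have "bracket_alternant (w(i := (\<lambda>t. \<Sum>l\<in>L. \<beta> l * h l t))) =
      (\<Sum>\<sigma> | \<sigma> permutes {0..<Suc r}. \<Sum>l\<in>L. \<beta> l * (signof \<sigma> * P \<sigma> l))"
    unfolding bracket_alternant_def P_def
    using bracket_product_linear[OF assms _ \<open>i < Suc r\<close> \<open>finite L\<close>]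
    by (intro sum.cong refl) (simp add: sum_distrib_left mult.left_commute)
  also have "\<dots> = (\<Sum>l\<in>L. \<beta> l * bracket_alternant (w(i := h l)))"
    unfolding bracket_alternant_def P_def
    by (subst sum.swap) (simp add: sum_distrib_left)
  finally show "bracket_alternant (w(i := (\<lambda>t. \<Sum>l\<in>L. \<beta> l * h l t))) =
      (\<Sum>l\<in>L. \<beta> l * bracket_alternant (w(i := h l)))" .
qed

end

lemma col_mem_cols_submatrix:
  assumes x: "x \<in> J" "x < dim_col M"
  shows "col M x \<in> set (cols (submatrix M UNIV J))"
proof -
  define x' where "x' = card {a\<in>J. a < x}"
  have "{a\<in>J. a < x} \<subset> {a. a < dim_col M \<and> a \<in> J}"
    using x by auto
  then have x': "x' < dim_col (submatrix M UNIV J)"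
    unfolding x'_def dim_submatrix by (intro psubset_card_mono) auto
  have "col (submatrix M UNIV J) x' = col M x"
  proof (rule eq_vecI)
    fix t assume "t < dim_vec (col M x)"
    then show "col (submatrix M UNIV J) x' $ t = col M x $ t"
      using submatrix_index_card[of t M x UNIV J] x x' unfolding x'_def by (simp add: dim_submatrix)
  qed (simp add: dim_submatrix)
  with x' show ?thesis
    by (metis cols_length cols_nth nth_mem)
qed

lemma nonzero_kernel_vec_of_cols_subset:
  fixes W S :: "'a::field mat"
  assumes W: "W \<in> carrier_mat n N" and S: "S \<in> carrier_mat n nc"
    and sub: "set (cols W) \<subseteq> set (cols S)" and dist: "distinct (cols W)"
    and rank: "vec_space.rank n S < N"
  obtains u i where "u \<in> carrier_vec N" "i < N" "u $ i \<noteq> 0" "W *\<^sub>v u = 0\<^sub>v n"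
proof -
  have card: "card (set (cols W)) = N"
    using W dist by (simp add: distinct_card)
  have dep: "module.lin_dep class_ring (module_vec TYPE('a) n) (set (cols W))"
  proof (rule ccontr)
    assume "\<not> ?thesis"
    from vec_space.rank_ge_card_indpt[OF S sub this] rank card show False
      by simp
  qed
  obtain u where u: "u \<in> carrier_vec N" "u \<noteq> 0\<^sub>v N" "W *\<^sub>v u = 0\<^sub>v n"
    by (rule vec_space.lin_depE[OF W dep dist])
  have "\<exists>i<N. u $ i \<noteq> 0"
  proof (rule ccontr)
    assume "\<not> ?thesis"
    then have "u = 0\<^sub>v N"
      using u(1) by (intro eq_vecI) auto
    with u(2) show False ..
  qed
  then show thesis
    using that u(1,3) by blast
qed

lemma cols_linear_relation_of_rank_le:
  fixes M :: "'a::field mat"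
  assumes rank: "vec_space.rank (dim_row M) (submatrix M UNIV J) \<le> r"
    and f: "\<And>l. l < Suc r \<Longrightarrow> f l \<in> J \<and> f l < dim_col M"
  obtains i v where "i < Suc r" "v i \<noteq> 0"
    "\<And>t. t < dim_row M \<Longrightarrow> (\<Sum>l<Suc r. v l * M $$ (t, f l)) = 0"
proof -
  define W where "W = mat (dim_row M) (Suc r) (\<lambda>(t, l). M $$ (t, f l))"
  have W: "W \<in> carrier_mat (dim_row M) (Suc r)"
    unfolding W_def by simp
  have col_W: "col W l = col M (f l)" if "l < Suc r" for l
    using that f[OF that] unfolding W_def by (intro eq_vecI) auto
  show thesis
  proof (cases "distinct (cols W)")
    case False
    then obtain i l where il: "i < Suc r" "l < Suc r" "i \<noteq> l" "col W i = col W l"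
      using W by (auto simp: distinct_conv_nth)
    have "M $$ (t, f i) = M $$ (t, f l)" if "t < dim_row M" for t
      using arg_cong[OF il(4), of "\<lambda>u. u $ t"] that col_W il(1,2) f il(1,2) by simp
    then show thesis
      using il(1,2,3) by (intro that[of i "\<lambda>x. of_bool (x = i) - of_bool (x = l)"])
        (auto simp: left_diff_distrib sum_subtractf)
  next
    case True
    define Sub where "Sub = submatrix M UNIV J"
    have Sub: "Sub \<in> carrier_mat (dim_row M) (dim_col Sub)"
      unfolding Sub_def by (intro carrier_matI) (simp_all add: dim_submatrix)
    have sub: "set (cols W) \<subseteq> set (cols Sub)"
    proof
      fix x assume "x \<in> set (cols W)"
      then obtain l where "l < Suc r" "x = col W l"
        using W by (metis carrier_matD(2) cols_length cols_nth in_set_conv_nth)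
      then show "x \<in> set (cols Sub)"
        using col_W f col_mem_cols_submatrix unfolding Sub_def by metis
    qed
    have "vec_space.rank (dim_row M) Sub < Suc r"
      using rank unfolding Sub_def by simp
    then obtain u i where u: "u \<in> carrier_vec (Suc r)" "i < Suc r" "u $ i \<noteq> 0"
      "W *\<^sub>v u = 0\<^sub>v (dim_row M)"
      by (rule nonzero_kernel_vec_of_cols_subset[OF W Sub sub True])
    have "(\<Sum>l<Suc r. u $ l * M $$ (t, f l)) = 0" if "t < dim_row M" for t
    proof -
      have "(W *\<^sub>v u) $ t = (\<Sum>l<Suc r. u $ l * M $$ (t, f l))"
        using that u(1) W unfolding W_def
        by (simp add: scalar_prod_def atLeast0LessThan mult.commute)
      with u(4) that show ?thesis by simp
    qed
    with u(2,3) show thesis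
      by (intro that[of i "\<lambda>l. u $ l"])
  qed
qed

lemma the_poly_at_eq_bracket_alternant:
  assumes k: "dim_row M = k" and fits: "\<forall>j<length lam. lam ! j + gam ! j \<le> k"
  shows "the_poly_at k r lam gam A B c M =
    bracket_alternant k r lam gam
      (\<lambda>j p t. M $$ (t, (if p < gam ! j then A j p else B j (p - gam ! j - lam ! j)) - 1))
      (\<lambda>l t. if t < k then M $$ (t, c l - 1) else 0)"
  unfolding the_poly_at_def bracket_alternant_def
proof (intro sum.cong refl arg_cong2[where f = "(*)"] prod.cong)
  fix \<sigma> j assume "j \<in> {..<length lam}"
  then have j: "j < length lam" by simp
  show "bracket M (block_seq k lam gam A B c \<sigma> j) =
    det (mat_of_col_fun k (factor_col lam gam
      (\<lambda>j p t. M $$ (t, (if p < gam ! j then A j p else B j (p - gam ! j - lam ! j)) - 1))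
      (\<lambda>l t. if t < k then M $$ (t, c l - 1) else 0) \<sigma> j))"
    unfolding bracket_def mat_of_col_fun_def factor_col_def k
    using fits j by (intro arg_cong[where f = det] eq_matI) (auto simp: block_seq_nth)
qed

theorem proposition5p1:
  fixes k n a m r :: nat
    and lam gam :: "nat list"
    and c :: "nat \<Rightarrow> nat"
    and A B :: "nat \<Rightarrow> nat \<Rightarrow> nat"
    and M :: "'a::field_char_0 mat"
  assumes "alg_closed_field TYPE('a)"
    and "1 \<le> k" and "k < n"
    and "a + m \<le> n"
    and "\<forall>i < Suc r. c i \<in> {a+1..a+m}"
    and "lam \<noteq> []" and "\<forall>x \<in> set lam. x > 0" and "sum_list lam = Suc r"
    and "length gam = length lam"
    and "\<forall>j. 1 \<le> j \<and> j < length lam \<longrightarrow> gam ! j \<ge> gam ! (j-1) + lam ! (j-1)"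
    and "\<forall>j < length lam. lam ! j + gam ! j \<le> k"
    and "\<forall>j < length lam. \<forall>i < gam ! j. A j i \<in> {1..n}"
    and "\<forall>j < length lam. \<forall>i < k - lam ! j - gam ! j. B j i \<in> {1..n}"
    and "in_X k n {a+1..a+m} r M"
  shows "the_poly_at k r lam gam A B c M = 0"
proof -
  have M: "dim_row M = k" "dim_col M = n"
    and rank: "vec_space.rank (dim_row M) (submatrix M UNIV {j. Suc j \<in> {a+1..a+m}}) \<le> r"
    using assms(14) unfolding in_X_def by auto
  define col_c where "col_c l = c l - 1" for l
  have cols_in_S: "col_c l \<in> {j. Suc j \<in> {a+1..a+m}} \<and> col_c l < dim_col M" if "l < Suc r" for l
    using assms(4,5) that M(2) unfolding col_c_def by auto
  obtain i v where i: "i < Suc r" "v i \<noteq> 0"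
    and relation: "\<And>t. t < dim_row M \<Longrightarrow> (\<Sum>l<Suc r. v l * M $$ (t, col_c l)) = 0"
    using cols_linear_relation_of_rank_le[where f = col_c, OF rank cols_in_S] by blast
  define fixed where "fixed j p t = M $$ (t, (if p < gam ! j then A j p else B j (p - gam ! j - lam ! j)) - 1)"
    for j p t
  \<comment> \<open>rows beyond \<open>k\<close> are set to \<open>0\<close>, so that the linear relation holds in every coordinate\<close>
  define w where "w l t = (if t < k then M $$ (t, c l - 1) else 0)" for l t
  have "(\<Sum>l<Suc r. v l * w l t) = 0" for t
    using relation[of t] M(1) unfolding w_def col_c_def by (cases "t < k") auto
  then have "bracket_alternant k r lam gam fixed w = 0"
    by (rule alternating_multilinear_form_dependent_eq_0[where F = "bracket_alternant k r lam gam fixed" and v = v,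
          OF multilinear_bracket_alternant[OF assms(8,11)] alternating_bracket_alternant i])
  then show ?thesis
    using the_poly_at_eq_bracket_alternant[OF M(1) assms(11)]
    unfolding fixed_def[abs_def] w_def[abs_def] by simp
qed

end
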